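(* Let $d\in\mathbb{Z}$ with $d>1$ and let $A\subseteq\mathbb{R}^2$ be finite and $d$-regular. Then \[ |\mathcal{N}_d(A,\emptyset,\mathbb{R}^2)|\geq\frac{1}{(2^{d+3})!}|A|^{\binom{d+2}{2}-3}. \]
   Context: For $k\in\mathbb{Z}^+$, a curve of degree $k$ is the zero set in $\mathbb{R}^2$ of a polynomial in $\mathbb{R}[x,y]$ of degree exactly $k$; $\mathcal{C}_k$ is the family of such curves and $\mathcal{C}_{\le k}:=\bigcup_{j=1}^k\mathcal{C}_j$. A finite set $A\subseteq\mathbb{R}^2$ is $d$-regular if $|A\cap C|<2^{-2^{3d+8}}|A|$ for all $C\in\mathcal{C}_{\le d}$. For $k\in\mathbb{Z}^+$ let $I_k=\{(i,j)\in\mathbb{Z}_{\ge 0}^2: 1\le i+j\le k\}$ and $\psi_k:\mathbb{R}^2\to\mathbb{R}^{\binom{k+2}{2}-1}$, $\psi_k(a_1,a_2)=(a_1^ia_2^j)_{(i,j)\in I_k}$; for $S\subseteq\mathbb{R}^N$, $\dim S$ is the dimension of its affine hull ($\dim\emptyset=-1$). $\mathcal{N}_d(A)$ is the family of $B\subseteq A$ with $|B|=\binom{d+2}{2}-3$ such that: (a) $\dim\psi_d(B)=\binom{d+2}{2}-4$; (b) for all $e\in\{1,\dots,d-1\}$ and $C\in\mathcal{C}_e$, $|B\cap C|<\binom{d+2}{2}-\binom{d-e+2}{2}$; (c) for all $e\in\{1,\dots,d-1\}$ and $C\in\mathcal{C}_e$ with $|B\cap C|=\binom{d+2}{2}-\binom{d-e+2}{2}-1$,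 $\dim\psi_{d-e}(B\setminus C)=\binom{d-e+2}{2}-3$; (d) for all $e\in\{1,\dots,d-1\}$ and $C\in\mathcal{C}_e$ with $|B\cap C|<\binom{d+2}{2}-\binom{d-e+2}{2}-1$, $\dim\psi_{d-e}(B\setminus C)>\binom{d-e+2}{2}-3$. For $B_0,C_0\subseteq\mathbb{R}^2$, $\mathcal{N}_d(A,B_0,C_0):=\{E\in\mathcal{N}_d(A): B_0\subseteq E\text{ and }E\cap C_0=E\setminus B_0\}$ (so $\mathcal{N}_d(A,\emptyset,\mathbb{R}^2)=\mathcal{N}_d(A)$). *)

theory Defs
  imports Complex_Main
begin

type_synonym pt = "real \<times> real"

definition poly_eval2 :: "nat \<Rightarrow> (nat \<Rightarrow> nat \<Rightarrow> real) \<Rightarrow> pt \<Rightarrow> real" where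
  "poly_eval2 k c p = (\<Sum>i\<le>k. \<Sum>j\<le>k - i. c i j * fst p ^ i * snd p ^ j)"

definition has_degree2 :: "nat \<Rightarrow> (nat \<Rightarrow> nat \<Rightarrow> real) \<Rightarrow> bool" where
  "has_degree2 k c \<longleftrightarrow> (\<forall>i j. k < i + j \<longrightarrow> c i j = 0) \<and> (\<exists>i j. i + j = k \<and> c i j \<noteq> 0)"

definition curves :: "nat \<Rightarrow> pt set set" where
  "curves k = {{p. poly_eval2 k c p = 0} | c. has_degree2 k c}"

definition regular :: "nat \<Rightarrow> pt set \<Rightarrow> bool" where
  "regular d A \<longleftrightarrow> (\<forall>e\<in>{1..d}. \<forall>C\<in>curves e.
      real (card (A \<inter> C)) < (1/2) ^ (2 ^ (3*d+8)) * real (card A))"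

definition Iset :: "nat \<Rightarrow> (nat \<times> nat) set" where
  "Iset k = {(i,j). 1 \<le> i + j \<and> i + j \<le> k}"

definition psi :: "nat \<Rightarrow> pt \<Rightarrow> (nat \<times> nat) \<Rightarrow> real" where
  "psi k p = (\<lambda>(i,j). if (i,j) \<in> Iset k then fst p ^ i * snd p ^ j else 0)"

definition aff_indep_psi :: "nat \<Rightarrow> pt set \<Rightarrow> bool" where
  "aff_indep_psi k T \<longleftrightarrow> (\<forall>u :: pt \<Rightarrow> real.
      (\<Sum>t\<in>T. u t) = 0 \<and> (\<forall>ij\<in>Iset k. (\<Sum>t\<in>T. u t * psi k t ij) = 0)
        \<longrightarrow> (\<forall>t\<in>T. u t = 0))"

text \<open>Dimension of the affine hull of psi_k(B), for finite B (= -1 for B empty):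
  the maximal size of an affinely independent subset minus one.\<close>
definition psi_dim :: "nat \<Rightarrow> pt set \<Rightarrow> int" where
  "psi_dim k B = (if B = {} then -1
     else Max {int (card T) - 1 | T. T \<subseteq> B \<and> T \<noteq> {} \<and> aff_indep_psi k T})"

abbreviation bn :: "nat \<Rightarrow> int" where
  "bn k \<equiv> int ((k + 2) choose 2)"

definition Nfam :: "nat \<Rightarrow> pt set \<Rightarrow> pt set set" where
  "Nfam d A = {B. B \<subseteq> A \<and> int (card B) = bn d - 3
     \<and> psi_dim d B = bn d - 4
     \<and> (\<forall>e\<in>{1..d-1}. \<forall>C\<in>curves e. int (card (B \<inter> C)) < bn d - bn (d-e))
     \<and> (\<forall>e\<in>{1..d-1}. \<forall>C\<in>curves e. int (card (B \<inter> C)) = bn d - bn (d-e) - 1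
           \<longrightarrow> psi_dim (d-e) (B - C) = bn (d-e) - 3)
     \<and> (\<forall>e\<in>{1..d-1}. \<forall>C\<in>curves e. int (card (B \<inter> C)) < bn d - bn (d-e) - 1
           \<longrightarrow> psi_dim (d-e) (B - C) > bn (d-e) - 3)}"

definition Nfam3 :: "nat \<Rightarrow> pt set \<Rightarrow> pt set \<Rightarrow> pt set \<Rightarrow> pt set set" where
  "Nfam3 d A B0 C0 = {E \<in> Nfam d A. B0 \<subseteq> E \<and> E \<inter> C0 = E - B0}"

end

theory Submission
  imports Defs
begin

text \<open>
  Call \<open>B\<close> in general position if for every \<open>k \<le> d\<close> every set of at most
  \<open>binom(k+2,2)\<close> points of \<open>B\<close> is affinely independent under \<open>psi_k\<close>, i.e. imposes independent
  conditions on polynomials of degree \<open>\<le> k\<close>. Such a set meets a curve of degree \<open>e\<close> in fewer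
  than \<open>binom(e+2,2)\<close> points, and from this (together with
  \<open>binom(e+2,2) + binom(d-e+2,2) \<le> binom(d+2,2)\<close>) every general position set of size
  \<open>binom(d+2,2) - 3\<close> satisfies the conditions defining \<open>N_d(A)\<close>.

  General position sets are counted greedily. If \<open>B\<close> is in general position and
  \<open>|B| < binom(d+2,2)\<close>, a point \<open>p\<close> spoiling general position of \<open>B \<union> {p}\<close> makes
  some independent \<open>S \<subseteq> B\<close> dependent, so \<open>p\<close> lies on the zero set of a nonzero polynomial
  of degree \<open>\<le> k\<close> vanishing on \<open>S\<close>. There are at most \<open>d 2^|B|\<close> such curves and by
  \<open>d\<close>-regularity they cover at most \<open>|A|/4\<close> points of \<open>A\<close>, so \<open>B\<close> has at least \<open>|A|/2\<close>
  extensions. Double counting then gives at least \<open>(|A|/2)^m / m!\<close> general position sets of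
  size \<open>m\<close>, which is at least \<open>|A|^m / (2^(d+3))!\<close>.
\<close>

lemma homogeneous_system_nontrivial_solution:
  fixes f :: "'j \<Rightarrow> 'a \<Rightarrow> real"
  assumes "finite J" "finite X" "card J < card X"
  shows "\<exists>x. (\<exists>a\<in>X. x a \<noteq> 0) \<and> (\<forall>j\<in>J. (\<Sum>a\<in>X. f j a * x a) = 0)"
  using assms
proof (induction J arbitrary: X f rule: finite_induct)
  case empty
  then obtain a where "a \<in> X" by fastforce
  then show ?case by (intro exI[of _ "\<lambda>_. 1"]) auto
next
  case (insert j0 J)
  show ?case
  proof (cases "\<forall>a\<in>X. f j0 a = 0")
    case True
    from insert obtain x where "\<exists>a\<in>X. x a \<noteq> 0" "\<forall>j\<in>J. (\<Sum>a\<in>X. f j a * x a) = 0"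
      by (metis Suc_lessD card_insert_disjoint)
    with True show ?thesis by (intro exI[of _ x]) auto
  next
    case False
    then obtain a0 where a0: "a0 \<in> X" "f j0 a0 \<noteq> 0" by blast
    \<comment> \<open>Gaussian elimination: solve equation \<open>j0\<close> for the unknown \<open>a0\<close> and substitute.\<close>
    define g where "g j a = f j a - f j a0 / f j0 a0 * f j0 a" for j a
    have "card J < card (X - {a0})" using insert a0 by auto
    from insert.IH[OF _ this, of g] insert.prems obtain y where
      y: "\<exists>a\<in>X - {a0}. y a \<noteq> 0" "\<forall>j\<in>J. (\<Sum>a\<in>X - {a0}. g j a * y a) = 0" by auto
    define s where "s = (\<Sum>a\<in>X - {a0}. f j0 a * y a)"
    define x where "x = y(a0 := - s / f j0 a0)"
    have split: "(\<Sum>a\<in>X. h a * x a) = h a0 * x a0 + (\<Sum>a\<in>X - {a0}. h a * y a)" for h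
      using a0 insert.prems by (simp add: sum.remove x_def)
    have "(\<Sum>a\<in>X. f j a * x a) = 0" if j: "j \<in> J" for j
    proof -
      have "(\<Sum>a\<in>X - {a0}. g j a * y a) = (\<Sum>a\<in>X - {a0}. f j a * y a) - f j a0 / f j0 a0 * s"
        by (simp add: g_def s_def algebra_simps sum_subtractf sum_distrib_left)
      with y(2) j show ?thesis unfolding split by (simp add: x_def)
    qed
    moreover have "(\<Sum>a\<in>X. f j0 a * x a) = 0"
      using a0 unfolding split by (simp add: x_def s_def)
    moreover have "\<exists>a\<in>X. x a \<noteq> 0" using y(1) by (auto simp: x_def)
    ultimately show ?thesis by blast
  qed
qed

lemma rows_dependent_if_columns_dependent:
  fixes M :: "'t \<Rightarrow> 'v \<Rightarrow> real"
  assumes "finite T" "finite V" "card V \<le> card T" "v0 \<in> V" "c v0 \<noteq> 0"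
    and columns: "\<And>t. t \<in> T \<Longrightarrow> (\<Sum>v\<in>V. c v * M t v) = 0"
  shows "\<exists>u. (\<exists>t\<in>T. u t \<noteq> 0) \<and> (\<forall>v\<in>V. (\<Sum>t\<in>T. u t * M t v) = 0)"
proof -
  \<comment> \<open>Column \<open>v0\<close> is a combination of the others, so a row relation killing the
    remaining \<open>card V - 1 < card T\<close> columns kills column \<open>v0\<close> as well.\<close>
  have "card V > 0" using assms(2,4) card_gt_0_iff by blast
  then have "card (V - {v0}) < card T" using assms(3,4) by (simp add: card_Diff_singleton)
  from homogeneous_system_nontrivial_solution[OF _ assms(1) this, of "\<lambda>v t. M t v"] assms(2)
  obtain u where u: "\<exists>t\<in>T. u t \<noteq> 0" "\<forall>v\<in>V - {v0}. (\<Sum>t\<in>T. M t v * u t) = 0" by auto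
  have "c v0 * (\<Sum>t\<in>T. u t * M t v0) = (\<Sum>t\<in>T. u t * (c v0 * M t v0))"
    by (simp add: sum_distrib_left algebra_simps)
  also have "\<dots> = (\<Sum>t\<in>T. u t * - (\<Sum>v\<in>V - {v0}. c v * M t v))"
  proof (rule sum.cong)
    fix t assume "t \<in> T"
    have "(\<Sum>v\<in>V. c v * M t v) = c v0 * M t v0 + (\<Sum>v\<in>V - {v0}. c v * M t v)"
      using assms(2,4) by (rule sum.remove)
    with columns[OF \<open>t \<in> T\<close>] have "c v0 * M t v0 = - (\<Sum>v\<in>V - {v0}. c v * M t v)"
      by (simp add: eq_neg_iff_add_eq_0)
    then show "u t * (c v0 * M t v0) = u t * - (\<Sum>v\<in>V - {v0}. c v * M t v)"
      by simp
  qed simp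
  also have "\<dots> = - (\<Sum>v\<in>V - {v0}. c v * (\<Sum>t\<in>T. M t v * u t))"
    by (simp add: sum_distrib_left sum_negf algebra_simps sum.swap[of _ T])
  also have "\<dots> = 0" using u(2) by simp
  finally have "(\<Sum>t\<in>T. u t * M t v0) = 0" using assms(5) by simp
  with u show ?thesis by (intro exI[of _ u]) (auto simp: mult.commute)
qed

definition monomials :: "nat \<Rightarrow> (nat \<times> nat) set" where
  "monomials k = {(i, j). i + j \<le> k}"

definition monomial :: "nat \<times> nat \<Rightarrow> pt \<Rightarrow> real" where
  "monomial ij p = fst p ^ fst ij * snd p ^ snd ij"

lemma monomials_Sigma: "monomials k = Sigma {..k} (\<lambda>i. {..k - i})"
  by (auto simp: monomials_def)

lemma finite_monomials [simp]: "finite (monomials k)"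
  by (simp add: monomials_Sigma)

lemma card_monomials: "card (monomials k) = (k + 2) choose 2"
proof (induction k)
  case 0
  have "monomials 0 = {(0, 0)}" by (auto simp: monomials_def)
  then show ?case by (simp add: numeral_2_eq_2)
next
  case (Suc k)
  define diagonal where "diagonal = (\<lambda>i. (i, Suc k - i)) ` {..Suc k}"
  have "monomials (Suc k) = monomials k \<union> diagonal" "monomials k \<inter> diagonal = {}"
    by (auto simp: monomials_def diagonal_def image_iff)
  moreover have "card diagonal = k + 2"
    unfolding diagonal_def by (subst card_image) (auto simp: inj_on_def)
  ultimately have "card (monomials (Suc k)) = ((k + 2) choose 2) + (k + 2)"
    using Suc by (simp add: card_Un_disjoint diagonal_def)
  then show ?case by (simp add: numeral_2_eq_2)
qed

lemma poly_eval2_eq_sum_monomials: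
  "poly_eval2 k c p = (\<Sum>ij\<in>monomials k. c (fst ij) (snd ij) * monomial ij p)"
  unfolding poly_eval2_def monomials_Sigma monomial_def
  by (simp add: sum.Sigma mult.assoc split_def)

lemma monomials_eq_insert_Iset: "monomials k = insert (0, 0) (Iset k)"
  by (auto simp: monomials_def Iset_def)

lemma aff_indep_psi_iff_monomials:
  "aff_indep_psi k T \<longleftrightarrow>
    (\<forall>u. (\<forall>ij\<in>monomials k. (\<Sum>t\<in>T. u t * monomial ij t) = 0) \<longrightarrow> (\<forall>t\<in>T. u t = 0))"
proof -
  have "(\<Sum>t\<in>T. u t * psi k t ij) = (\<Sum>t\<in>T. u t * monomial ij t)" if "ij \<in> Iset k" for u ij
    using that by (auto simp: psi_def monomial_def split_def intro!: sum.cong)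
  then show ?thesis
    unfolding aff_indep_psi_def monomials_eq_insert_Iset by (auto simp: monomial_def)
qed

lemma aff_indep_psi_empty [simp]: "aff_indep_psi k {}"
  and aff_indep_psi_singleton [simp]: "aff_indep_psi k {p}"
  unfolding aff_indep_psi_def by simp_all

lemma not_aff_indep_psi_on_curve:
  assumes "C \<in> curves e" "finite T" "T \<subseteq> C" "(e + 2) choose 2 \<le> card T"
  shows "\<not> aff_indep_psi e T"
proof -
  from assms(1) obtain c where "has_degree2 e c" and C: "C = {p. poly_eval2 e c p = 0}"
    by (auto simp: curves_def)
  then obtain i0 j0 where ij0: "i0 + j0 = e" "c i0 j0 \<noteq> 0" by (auto simp: has_degree2_def)
  \<comment> \<open>The defining polynomial is a relation between the monomial columns of the points of \<open>T\<close>.\<close>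
  have "\<exists>u. (\<exists>t\<in>T. u t \<noteq> 0) \<and> (\<forall>ij\<in>monomials e. (\<Sum>t\<in>T. u t * monomial ij t) = 0)"
  proof (rule rows_dependent_if_columns_dependent)
    show "card (monomials e) \<le> card T" using assms(4) by (simp add: card_monomials)
    show "(i0, j0) \<in> monomials e" using ij0 by (simp add: monomials_def)
    show "(\<Sum>ij\<in>monomials e. c (fst ij) (snd ij) * monomial ij t) = 0" if "t \<in> T" for t
      using that assms(3) C by (auto simp: poly_eval2_eq_sum_monomials)
  qed (use assms(2) ij0 in auto)
  then show ?thesis unfolding aff_indep_psi_iff_monomials by blast
qed

lemma zero_set_in_curves:
  fixes c :: "nat \<times> nat \<Rightarrow> real"
  assumes nonzero: "\<exists>ij\<in>monomials k. c ij \<noteq> 0"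
    and zero: "(\<Sum>ij\<in>monomials k. c ij * monomial ij s) = 0"
  shows "\<exists>e\<in>{1..k}. {p. (\<Sum>ij\<in>monomials k. c ij * monomial ij p) = 0} \<in> curves e"
proof -
  define D where "D = {ij\<in>monomials k. c ij \<noteq> 0}"
  have "finite D" "D \<noteq> {}" using nonzero by (auto simp: D_def)
  define e where "e = Max ((\<lambda>ij. fst ij + snd ij) ` D)"
  have De: "fst ij + snd ij \<le> e" if "ij \<in> D" for ij
    unfolding e_def using \<open>finite D\<close> that by simp
  obtain ij0 where ij0: "ij0 \<in> D" "fst ij0 + snd ij0 = e"
    unfolding e_def using \<open>finite D\<close> \<open>D \<noteq> {}\<close> by (metis (no_types, lifting) Max_in finite_imageI image_iff image_is_empty)
  have "e \<le> k" using ij0 by (auto simp: D_def monomials_def)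
  define c' where "c' i j = (if (i, j) \<in> D then c (i, j) else 0)" for i j
  have "c' i j = 0" if "e < i + j" for i j
    using De[of "(i, j)"] that by (auto simp: c'_def)
  moreover have "c' (fst ij0) (snd ij0) \<noteq> 0" using ij0(1) by (simp add: c'_def D_def)
  ultimately have "has_degree2 e c'" unfolding has_degree2_def using ij0(2) by blast
  have sum_D: "(\<Sum>ij\<in>monomials k. c ij * monomial ij p) = (\<Sum>ij\<in>D. c ij * monomial ij p)" for p
    by (intro sum.mono_neutral_right) (auto simp: D_def)
  have eval: "poly_eval2 e c' p = (\<Sum>ij\<in>monomials k. c ij * monomial ij p)" for p
  proof -
    have "D \<subseteq> monomials e" using De by (auto simp: monomials_def)
    then show ?thesis
      unfolding poly_eval2_eq_sum_monomials sum_D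
      by (intro sum.mono_neutral_cong_right) (auto simp: c'_def)
  qed
  \<comment> \<open>A nonzero constant has no zero, so the degree is positive.\<close>
  have "e \<in> {1..k}"
  proof (rule ccontr)
    assume "e \<notin> {1..k}"
    then have "e = 0" using \<open>e \<le> k\<close> by simp
    then have "D \<subseteq> {(0, 0)}" using De by fastforce
    then have "D = {(0, 0)}" using \<open>D \<noteq> {}\<close> by blast
    moreover from this have "(0, 0) \<in> D" by simp
    then have "c (0, 0) \<noteq> 0" by (simp add: D_def)
    ultimately show False using zero sum_D[of s] by (simp add: monomial_def)
  qed
  moreover have "{p. (\<Sum>ij\<in>monomials k. c ij * monomial ij p) = 0} = {p. poly_eval2 e c' p = 0}"
    by (simp add: eval)
  then have "{p. (\<Sum>ij\<in>monomials k. c ij * monomial ij p) = 0} \<in> curves e"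
    using \<open>has_degree2 e c'\<close> unfolding curves_def by blast
  ultimately show ?thesis ..
qed

lemma dependent_extensions_on_curve:
  assumes "finite S" "s \<in> S" "aff_indep_psi k S" "card S < (k + 2) choose 2"
  obtains e C where "e \<in> {1..k}" "C \<in> curves e" "{p. \<not> aff_indep_psi k (insert p S)} \<subseteq> C"
proof -
  have "card S < card (monomials k)" using assms(4) by (simp add: card_monomials)
  from homogeneous_system_nontrivial_solution[OF assms(1) finite_monomials this, of "\<lambda>s ij. monomial ij s"]
  obtain c where c: "\<exists>ij\<in>monomials k. c ij \<noteq> 0"
    and vanish: "\<forall>s\<in>S. (\<Sum>ij\<in>monomials k. monomial ij s * c ij) = 0"
    by blast
  define P where "P t = (\<Sum>ij\<in>monomials k. c ij * monomial ij t)" for t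
  have P_S: "P t = 0" if "t \<in> S" for t
    using vanish that by (simp add: P_def mult.commute)
  \<comment> \<open>In a relation among \<open>insert p S\<close> the coefficient of \<open>p\<close> is nonzero, and pairing the
    relation with \<open>c\<close> leaves only the term \<open>u p * P p\<close>.\<close>
  have "P p = 0" if dep: "\<not> aff_indep_psi k (insert p S)" for p
  proof -
    from dep obtain u where u: "\<forall>ij\<in>monomials k. (\<Sum>t\<in>insert p S. u t * monomial ij t) = 0"
      and u_nonzero: "\<exists>t\<in>insert p S. u t \<noteq> 0"
      unfolding aff_indep_psi_iff_monomials by blast
    have "p \<notin> S" using dep assms(3) by (metis insert_absorb)
    have "u p \<noteq> 0"
    proof
      assume "u p = 0"
      then have "\<forall>ij\<in>monomials k. (\<Sum>t\<in>S. u t * monomial ij t) = 0"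
        using u \<open>p \<notin> S\<close> assms(1) by simp
      with assms(3) have "\<forall>t\<in>S. u t = 0" unfolding aff_indep_psi_iff_monomials by blast
      with u_nonzero \<open>u p = 0\<close> show False by auto
    qed
    have "0 = (\<Sum>ij\<in>monomials k. c ij * (\<Sum>t\<in>insert p S. u t * monomial ij t))" using u by simp
    also have "\<dots> = (\<Sum>t\<in>insert p S. u t * P t)"
      unfolding P_def by (simp add: sum_distrib_left sum.swap[of _ "monomials k"] algebra_simps)
    also have "\<dots> = u p * P p" using \<open>p \<notin> S\<close> assms(1) P_S by simp
    finally show ?thesis using \<open>u p \<noteq> 0\<close> by simp
  qed
  moreover obtain e where "e \<in> {1..k}" "{p. P p = 0} \<in> curves e"
    using zero_set_in_curves[OF c P_S[OF assms(2), unfolded P_def]] unfolding P_def by blast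
  ultimately show ?thesis using that[of e "{p. P p = 0}"] by blast
qed

lemma double_choose_two: "2 * ((k + 2) choose 2) = (k + 2) * (k + 1)"
proof -
  have "even ((k + 2) * (k + 1))" by simp
  then show ?thesis by (simp add: choose_two)
qed

lemma choose_two_ge_three: "1 \<le> k \<Longrightarrow> 3 \<le> (k + 2) choose 2"
  using double_choose_two[of k] mult_le_mono[of 3 "k + 2" 2 "k + 1"] by simp

lemma choose_two_superadditive:
  assumes "1 \<le> e" "1 \<le> f"
  shows "((e + 2) choose 2) + ((f + 2) choose 2) \<le> (e + f + 2) choose 2"
proof -
  have "(e + f + 2) * (e + f + 1) + 2 = (e + 2) * (e + 1) + (f + 2) * (f + 1) + 2 * (e * f)"
    by (simp add: algebra_simps)
  moreover have "1 \<le> e * f" using assms by simp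
  ultimately show ?thesis
    using double_choose_two[of e] double_choose_two[of f] double_choose_two[of "e + f"] by linarith
qed

definition in_general_position :: "nat \<Rightarrow> pt set \<Rightarrow> bool" where
  "in_general_position d B \<longleftrightarrow>
     (\<forall>k\<in>{1..d}. \<forall>T\<subseteq>B. card T \<le> (k + 2) choose 2 \<longrightarrow> aff_indep_psi k T)"

lemma in_general_position_empty [simp]: "in_general_position d {}"
  by (simp add: in_general_position_def)

lemma card_inter_curve_less:
  assumes "in_general_position d B" "finite B" "e \<in> {1..d}" "C \<in> curves e"
  shows "card (B \<inter> C) < (e + 2) choose 2"
proof (rule ccontr)
  assume "\<not> ?thesis"
  then obtain T where T: "T \<subseteq> B \<inter> C" "card T = (e + 2) choose 2" "finite T"
    by (metis not_less obtain_subset_with_card_n)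
  then have "aff_indep_psi e T"
    using assms(1,3) unfolding in_general_position_def by auto
  moreover have "\<not> aff_indep_psi e T"
    using not_aff_indep_psi_on_curve[OF assms(4) T(3)] T(1,2) by auto
  ultimately show False by contradiction
qed

lemma finite_psi_dim_candidates:
  "finite B \<Longrightarrow> finite {int (card T) - 1 | T. T \<subseteq> B \<and> T \<noteq> {} \<and> aff_indep_psi k T}"
  by (rule finite_subset[of _ "(\<lambda>T. int (card T) - 1) ` Pow B"]) auto

lemma psi_dim_ge_card:
  assumes "finite B" "T \<subseteq> B" "T \<noteq> {}" "aff_indep_psi k T"
  shows "int (card T) - 1 \<le> psi_dim k B"
  using assms finite_psi_dim_candidates[OF assms(1), of k] unfolding psi_dim_def
  by (auto intro!: Max_ge)

lemma psi_dim_le_card: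
  assumes "finite B"
  shows "psi_dim k B \<le> int (card B) - 1"
proof (cases "B = {}")
  case False
  let ?S = "{int (card T) - 1 | T. T \<subseteq> B \<and> T \<noteq> {} \<and> aff_indep_psi k T}"
  from False obtain b where "b \<in> B" by blast
  then have "int (card {b}) - 1 \<in> ?S" by (intro CollectI exI[of _ "{b}"]) simp
  then have "Max ?S \<le> int (card B) - 1"
  proof (intro Max.boundedI[OF finite_psi_dim_candidates[OF assms]])
    fix x assume "x \<in> ?S"
    then obtain T where "x = int (card T) - 1" "T \<subseteq> B" by blast
    then show "x \<le> int (card B) - 1" using card_mono[OF assms, of T] by simp
  qed blast
  with False show ?thesis by (simp add: psi_dim_def)
qed (simp add: psi_dim_def)

lemma psi_dim_in_general_position:
  assumes "in_general_position d B" "finite B" "k \<in> {1..d}" "B' \<subseteq> B"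
    and "n \<le> card B'" "n \<le> (k + 2) choose 2"
  shows "int n - 1 \<le> psi_dim k B'"
proof -
  have "finite B'" using assms(2,4) finite_subset by blast
  obtain T where T: "T \<subseteq> B'" "card T = n"
    using obtain_subset_with_card_n[OF assms(5)] by blast
  show ?thesis
  proof (cases "T = {}")
    case True
    show ?thesis
    proof (cases "B' = {}")
      case False
      then obtain b where "b \<in> B'" by blast
      then have "int (card {b}) - 1 \<le> psi_dim k B'" by (intro psi_dim_ge_card \<open>finite B'\<close>) auto
      with T(2) True show ?thesis by simp
    qed (use T(2) True in \<open>simp add: psi_dim_def\<close>)
  next
    case False
    have "aff_indep_psi k T"
      using assms(1,3,4,6) T unfolding in_general_position_def by auto
    with T False show ?thesis using psi_dim_ge_card[OF \<open>finite B'\<close>] by blast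
  qed
qed

lemma in_general_position_curve_conditions:
  assumes gp: "in_general_position d B" and "finite B" "card B = ((d + 2) choose 2) - 3"
    and e: "e \<in> {1..d - 1}" and C: "C \<in> curves e"
  shows "int (card (B \<inter> C)) < bn d - bn (d - e)"
    and "int (card (B \<inter> C)) = bn d - bn (d - e) - 1 \<Longrightarrow> psi_dim (d - e) (B - C) = bn (d - e) - 3"
    and "int (card (B \<inter> C)) < bn d - bn (d - e) - 1 \<Longrightarrow> bn (d - e) - 3 < psi_dim (d - e) (B - C)"
proof -
  define f where "f = d - e"
  have "f \<in> {1..d}" "e \<in> {1..d}" "d = e + f" using e by (auto simp: f_def)
  have card_B: "int (card B) = bn d - 3"
    using assms(3) choose_two_ge_three[of d] \<open>e \<in> {1..d}\<close> by simp
  have inter: "card (B \<inter> C) < (e + 2) choose 2"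
    using card_inter_curve_less[OF gp \<open>finite B\<close> \<open>e \<in> {1..d}\<close> C] .
  have super: "((e + 2) choose 2) + ((f + 2) choose 2) \<le> (d + 2) choose 2"
    using choose_two_superadditive[of e f] \<open>d = e + f\<close> \<open>f \<in> {1..d}\<close> e by simp
  have card_diff: "int (card (B - C)) = int (card B) - int (card (B \<inter> C))"
    using card_Diff_subset_Int[of B C] \<open>finite B\<close> card_mono[OF \<open>finite B\<close>, of "B \<inter> C"] by auto
  have upper: "psi_dim f (B - C) \<le> int (card (B - C)) - 1"
    using psi_dim_le_card \<open>finite B\<close> by simp
  have lower: "int n - 1 \<le> psi_dim f (B - C)" if "n \<le> card (B - C)" "n \<le> (f + 2) choose 2" for n
    using psi_dim_in_general_position[OF gp \<open>finite B\<close> \<open>f \<in> {1..d}\<close> _ that] by blast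
  have "3 \<le> (f + 2) choose 2" using choose_two_ge_three \<open>f \<in> {1..d}\<close> by simp
  show "int (card (B \<inter> C)) < bn d - bn (d - e)"
    using inter super unfolding f_def[symmetric] by linarith
  show "psi_dim (d - e) (B - C) = bn (d - e) - 3"
    if "int (card (B \<inter> C)) = bn d - bn (d - e) - 1"
  proof -
    have "card (B - C) = ((f + 2) choose 2) - 2"
      using that card_diff card_B \<open>3 \<le> (f + 2) choose 2\<close> unfolding f_def[symmetric] by linarith
    then show ?thesis
      using upper lower[of "card (B - C)"] \<open>3 \<le> (f + 2) choose 2\<close> unfolding f_def by linarith
  qed
  show "bn (d - e) - 3 < psi_dim (d - e) (B - C)"
    if "int (card (B \<inter> C)) < bn d - bn (d - e) - 1"
  proof -
    have "((f + 2) choose 2) - 1 \<le> card (B - C)"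
      using that card_diff card_B \<open>3 \<le> (f + 2) choose 2\<close> unfolding f_def[symmetric] by linarith
    then show ?thesis
      using lower[of "((f + 2) choose 2) - 1"] \<open>3 \<le> (f + 2) choose 2\<close> unfolding f_def by linarith
  qed
qed

lemma in_general_position_Nfam:
  assumes "1 \<le> d" "finite A" "B \<subseteq> A" "card B = ((d + 2) choose 2) - 3"
    and gp: "in_general_position d B"
  shows "B \<in> Nfam d A"
proof -
  have "finite B" using assms(2,3) finite_subset by blast
  have card_B: "int (card B) = bn d - 3" using assms(1,4) choose_two_ge_three[of d] by simp
  have "psi_dim d B = bn d - 4"
    using psi_dim_le_card[OF \<open>finite B\<close>, of d]
      psi_dim_in_general_position[OF gp \<open>finite B\<close> _ order_refl, of d "card B"] assms(1,4) card_B
    by simp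
  then show ?thesis
    unfolding Nfam_def
    using assms(3) card_B in_general_position_curve_conditions[OF gp \<open>finite B\<close> assms(4)] by blast
qed

lemma vertical_line_in_curves: "{p. fst p = x} \<in> curves 1"
proof -
  define c :: "nat \<Rightarrow> nat \<Rightarrow> real" where
    "c i j = (if i = 1 \<and> j = 0 then 1 else if i = 0 \<and> j = 0 then - x else 0)" for i j
  have "has_degree2 1 c" unfolding has_degree2_def c_def by auto
  moreover have "{p. fst p = x} = {p. poly_eval2 1 c p = 0}"
    by (simp add: poly_eval2_def c_def atMost_Suc)
  ultimately show ?thesis unfolding curves_def by blast
qed

lemma regular_card_gt:
  assumes "regular d A" "1 \<le> d"
  shows "2 ^ 2 ^ (3 * d + 8) < real (card A)"
proof -
  have line: "real (card (A \<inter> {p. fst p = x})) < (1 / 2) ^ 2 ^ (3 * d + 8) * real (card A)" for x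
    using assms vertical_line_in_curves[of x] unfolding regular_def by auto
  then have "card A \<noteq> 0" by (metis mult_zero_right of_nat_0 of_nat_less_0_iff)
  then have "finite A" "A \<noteq> {}" by (auto simp: card_eq_0_iff)
  then obtain a where "a \<in> A" by blast
  then have "1 \<le> card (A \<inter> {p. fst p = fst a})"
    using \<open>finite A\<close> by (simp add: Suc_le_eq card_gt_0_iff) blast
  then have "1 \<le> real (card (A \<inter> {p. fst p = fst a}))" by simp
  moreover have "(1 / 2) ^ 2 ^ (3 * d + 8) * real (card A) = real (card A) / 2 ^ 2 ^ (3 * d + 8)"
    by (simp add: power_one_over)
  ultimately have "1 < real (card A) / 2 ^ 2 ^ (3 * d + 8)" using line[of "fst a"] by linarith
  then show ?thesis by (simp add: less_divide_eq)
qed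

lemma card_dependent_extensions_less:
  assumes "regular d A" "finite A" "k \<in> {1..d}"
    and "finite S" "s \<in> S" "aff_indep_psi k S" "card S < (k + 2) choose 2"
  shows "real (card (A \<inter> {p. \<not> aff_indep_psi k (insert p S)}))
           < (1 / 2) ^ 2 ^ (3 * d + 8) * real (card A)"
proof -
  obtain e C where "e \<in> {1..k}" "C \<in> curves e" "{p. \<not> aff_indep_psi k (insert p S)} \<subseteq> C"
    using dependent_extensions_on_curve[OF assms(4-7)] .
  moreover from this have "card (A \<inter> {p. \<not> aff_indep_psi k (insert p S)}) \<le> card (A \<inter> C)"
    using assms(2) by (intro card_mono) auto
  ultimately show ?thesis
    using assms(1,3) unfolding regular_def by (meson atLeastAtMost_iff le_trans of_nat_le_iff order.strict_trans1)
qed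

lemma spoiling_point_dependent_extension:
  assumes "finite B" "in_general_position d B" "\<not> in_general_position d (insert p B)"
  obtains k S where "k \<in> {1..d}" "S \<subseteq> B" "S \<noteq> {}" "aff_indep_psi k S"
    "card S < (k + 2) choose 2" "\<not> aff_indep_psi k (insert p S)"
proof -
  from assms(3) obtain k T where k: "k \<in> {1..d}" and T: "T \<subseteq> insert p B"
    "card T \<le> (k + 2) choose 2" and dep: "\<not> aff_indep_psi k T"
    unfolding in_general_position_def by blast
  have "finite T" using T(1) assms(1) finite_subset by blast
  have "p \<in> T"
    using assms(2) k T dep unfolding in_general_position_def by (metis subset_insert)
  define S where "S = T - {p}"
  have "T = insert p S" using \<open>p \<in> T\<close> by (auto simp: S_def)
  have "S \<subseteq> B" using T(1) by (auto simp: S_def)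
  have "card S < (k + 2) choose 2"
    using T(2) \<open>p \<in> T\<close> \<open>finite T\<close> card_gt_0_iff[of T] by (auto simp: S_def)
  then have "aff_indep_psi k S"
    using assms(2) k \<open>S \<subseteq> B\<close> unfolding in_general_position_def by auto
  moreover have "S \<noteq> {}" using dep \<open>T = insert p S\<close> by auto
  ultimately show ?thesis
    using that k \<open>S \<subseteq> B\<close> \<open>card S < (k + 2) choose 2\<close> dep \<open>T = insert p S\<close> by blast
qed

lemma card_spoiling_points_le:
  assumes "regular d A" "finite A" "B \<subseteq> A" "in_general_position d B"
  shows "real (card {p \<in> A - B. \<not> in_general_position d (insert p B)})
           \<le> real d * 2 ^ card B * ((1 / 2) ^ 2 ^ (3 * d + 8) * real (card A))"
proof -
  define bound where "bound = (1 / 2) ^ 2 ^ (3 * d + 8) * real (card A)"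
  define Q where "Q k = {S. S \<subseteq> B \<and> S \<noteq> {} \<and> aff_indep_psi k S \<and> card S < (k + 2) choose 2}" for k
  define X where "X k S = A \<inter> {p. \<not> aff_indep_psi k (insert p S)}" for k S
  have "finite B" using assms(2,3) finite_subset by blast
  have finite_Q: "finite (Q k)" and card_Q: "card (Q k) \<le> 2 ^ card B" for k
  proof -
    have "Q k \<subseteq> Pow B" by (auto simp: Q_def)
    then show "finite (Q k)" "card (Q k) \<le> 2 ^ card B"
      using \<open>finite B\<close> finite_subset card_mono[of "Pow B" "Q k"] by (auto simp: card_Pow)
  qed
  have X_small: "real (card (X k S)) \<le> bound" if "k \<in> {1..d}" "S \<in> Q k" for k S
  proof -
    from that obtain s where "s \<in> S" by (auto simp: Q_def)
    with that show ?thesis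
      using card_dependent_extensions_less[OF assms(1,2), of k S s] \<open>finite B\<close> finite_subset
      unfolding X_def bound_def Q_def by fastforce
  qed
  have "{p \<in> A - B. \<not> in_general_position d (insert p B)} \<subseteq> (\<Union>k\<in>{1..d}. \<Union>S\<in>Q k. X k S)"
  proof
    fix p assume p: "p \<in> {p \<in> A - B. \<not> in_general_position d (insert p B)}"
    then obtain k S where "k \<in> {1..d}" "S \<in> Q k" "\<not> aff_indep_psi k (insert p S)"
      using spoiling_point_dependent_extension[OF \<open>finite B\<close> assms(4)] unfolding Q_def by blast
    with p show "p \<in> (\<Union>k\<in>{1..d}. \<Union>S\<in>Q k. X k S)" by (auto simp: X_def)
  qed
  then have "card {p \<in> A - B. \<not> in_general_position d (insert p B)} \<le> card (\<Union>k\<in>{1..d}. \<Union>S\<in>Q k. X k S)"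
    using assms(2) by (intro card_mono) (auto simp: X_def)
  also have "\<dots> \<le> (\<Sum>k\<in>{1..d}. card (\<Union>S\<in>Q k. X k S))"
    by (rule card_UN_le) simp
  also have "\<dots> \<le> (\<Sum>k\<in>{1..d}. \<Sum>S\<in>Q k. card (X k S))"
    by (intro sum_mono card_UN_le finite_Q)
  finally have "real (card {p \<in> A - B. \<not> in_general_position d (insert p B)})
      \<le> (\<Sum>k\<in>{1..d}. \<Sum>S\<in>Q k. real (card (X k S)))"
    by (simp flip: of_nat_sum)
  also have "\<dots> \<le> (\<Sum>k\<in>{1..d}. real (card (Q k)) * bound)"
    by (intro sum_mono sum_bounded_above) (use X_small in auto)
  also have "\<dots> \<le> (\<Sum>k\<in>{1..d}. 2 ^ card B * bound)"
    by (intro sum_mono mult_right_mono) (use card_Q in \<open>auto simp: bound_def\<close>)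
  finally show ?thesis by (simp add: bound_def)
qed

lemma regularity_exponent_bound:
  assumes "i < (d + 2) choose 2"
  shows "4 * d * 2 ^ i \<le> (2::nat) ^ 2 ^ (3 * d + 8)"
proof -
  have "i < 2 ^ (d + 2)" using assms binomial_le_pow2[of "d + 2" 2] by linarith
  moreover have "d + 2 < 2 ^ (d + 2)" by (rule less_exp)
  moreover have "(2::nat) ^ (d + 2) \<le> 2 ^ (3 * d + 7)" by (rule power_increasing) simp_all
  moreover have "(2::nat) ^ (3 * d + 8) = 2 ^ (3 * d + 7) + 2 ^ (3 * d + 7)" by (simp add: power_add)
  ultimately have "d + i + 2 \<le> 2 ^ (3 * d + 8)" by linarith
  have "4 * d * 2 ^ i \<le> 4 * 2 ^ d * (2::nat) ^ i" using less_exp[of d] by simp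
  also have "\<dots> = 2 ^ (d + i + 2)" by (simp add: power_add)
  also have "\<dots> \<le> 2 ^ 2 ^ (3 * d + 8)"
    using \<open>d + i + 2 \<le> 2 ^ (3 * d + 8)\<close> by (intro power_increasing) simp_all
  finally show ?thesis .
qed

lemma card_general_position_extensions_ge:
  assumes "regular d A" "finite A" "1 \<le> d" "B \<subseteq> A" "in_general_position d B"
    and "card B < (d + 2) choose 2"
  shows "real (card A) / 2 \<le> real (card {p \<in> A - B. in_general_position d (insert p B)})"
proof -
  define N :: nat where "N = 2 ^ (3 * d + 8)"
  define a where "a = real (card A)"
  have "a > 2 ^ N" using regular_card_gt[OF assms(1,3)] unfolding a_def N_def by simp
  have "real (4 * d * 2 ^ card B) \<le> 2 ^ N"
    using regularity_exponent_bound[OF assms(6)] unfolding N_def by (metis of_nat_le_iff of_nat_numeral of_nat_power)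
  then have threshold: "4 * real d * 2 ^ card B \<le> 2 ^ N" by simp
  have "real d * 2 ^ card B * ((1 / 2) ^ N * a) = (4 * real d * 2 ^ card B / 2 ^ N) * (a / 4)"
    by (simp add: power_one_over)
  also have "\<dots> \<le> 1 * (a / 4)"
    using threshold by (intro mult_right_mono) (simp_all add: a_def)
  finally have spoilers: "real (card {p \<in> A - B. \<not> in_general_position d (insert p B)}) \<le> a / 4"
    using card_spoiling_points_le[OF assms(1,2,4,5)] unfolding a_def N_def by linarith
  have "card B < 2 ^ card B" by (rule less_exp)
  moreover have "2 ^ card B \<le> d * 2 ^ card B" using assms(3) by simp
  ultimately have "card B \<le> d * 2 ^ card B" by linarith
  then have "real (card B) \<le> real (d * 2 ^ card B)" by (rule of_nat_mono)
  then have "4 * real (card B) \<le> a" using threshold \<open>a > 2 ^ N\<close> by simp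
  have "card (A - B) = card {p \<in> A - B. in_general_position d (insert p B)}
      + card {p \<in> A - B. \<not> in_general_position d (insert p B)}"
    using assms(2) by (subst card_Un_disjoint[symmetric]) (auto intro: arg_cong[where f = card])
  moreover have "card (A - B) = card A - card B" "card B \<le> card A"
    using assms(2,4) by (simp_all add: card_Diff_subset card_mono finite_subset)
  ultimately show ?thesis using spoilers \<open>4 * real (card B) \<le> a\<close> unfolding a_def by linarith
qed

lemma card_extensions_double_count:
  assumes "finite A"
  shows "(\<Sum>B\<in>{B. B \<subseteq> A \<and> card B = i \<and> P B}. card {p \<in> A - B. P (insert p B)})
           \<le> card {B. B \<subseteq> A \<and> card B = Suc i \<and> P B} * Suc i"
proof -
  define G where "G j = {B. B \<subseteq> A \<and> card B = j \<and> P B}" for j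
  define Ext where "Ext B = {p \<in> A - B. P (insert p B)}" for B
  have finite_G: "finite (G j)" for j
    by (rule finite_subset[of _ "Pow A"]) (use assms in \<open>auto simp: G_def\<close>)
  have finite_members: "finite B" if "B \<in> G j" for B j
    using that assms finite_subset by (auto simp: G_def)
  define f where "f = (\<lambda>(B, p). (insert p B, p :: 'a))"
  have "inj_on f (Sigma (G i) Ext)"
  proof (rule inj_onI)
    fix x y assume "x \<in> Sigma (G i) Ext" "y \<in> Sigma (G i) Ext" "f x = f y"
    then obtain B B' p where "x = (B, p)" "y = (B', p)" "p \<notin> B" "p \<notin> B'" "insert p B = insert p B'"
      by (auto simp: f_def Ext_def)
    then show "x = y" by (metis Diff_insert_absorb)
  qed
  then have "card (Sigma (G i) Ext) = card (f ` Sigma (G i) Ext)" by (rule card_image[symmetric])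
  also have "\<dots> \<le> card (Sigma (G (Suc i)) (\<lambda>B. B))"
  proof (rule card_mono)
    show "finite (Sigma (G (Suc i)) (\<lambda>B. B))"
      by (rule finite_SigmaI[OF finite_G]) (simp add: finite_members)
    show "f ` Sigma (G i) Ext \<subseteq> Sigma (G (Suc i)) (\<lambda>B. B)"
    proof
      fix z assume "z \<in> f ` Sigma (G i) Ext"
      then obtain B p where "B \<in> G i" "p \<in> Ext B" "z = (insert p B, p)" by (auto simp: f_def)
      then show "z \<in> Sigma (G (Suc i)) (\<lambda>B. B)"
        using finite_members[of B i] by (auto simp: G_def Ext_def)
    qed
  qed
  also have "\<dots> = (\<Sum>B\<in>G (Suc i). card B)"
    by (rule card_SigmaI[OF finite_G]) (simp add: finite_members)
  also have "\<dots> = card (G (Suc i)) * Suc i"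
    by (simp add: G_def)
  finally have "card (Sigma (G i) Ext) \<le> card (G (Suc i)) * Suc i" .
  moreover have "card (Sigma (G i) Ext) = (\<Sum>B\<in>G i. card (Ext B))"
    by (rule card_SigmaI[OF finite_G]) (simp add: Ext_def assms)
  ultimately have "(\<Sum>B\<in>G i. card (Ext B)) \<le> card (G (Suc i)) * Suc i" by simp
  then show ?thesis unfolding G_def Ext_def .
qed

lemma card_greedy_lower_bound:
  fixes x :: real
  assumes "finite A" "P {}" "0 \<le> x"
    and extend: "\<And>B. B \<subseteq> A \<Longrightarrow> card B < n \<Longrightarrow> P B \<Longrightarrow> x \<le> real (card {p \<in> A - B. P (insert p B)})"
  shows "x ^ n / fact n \<le> real (card {B. B \<subseteq> A \<and> card B = n \<and> P B})"
proof -
  define G where "G j = {B. B \<subseteq> A \<and> card B = j \<and> P B}" for j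
  have "x ^ i / fact i \<le> real (card (G i))" if "i \<le> n" for i
    using that
  proof (induction i)
    case 0
    have "B = {}" if "B \<subseteq> A" "card B = 0" for B
      using that assms(1) by (metis card_0_eq finite_subset)
    then have "G 0 = {{}}" using assms(2) by (auto simp: G_def)
    then show ?case by simp
  next
    case (Suc i)
    have "x ^ i / fact i * x \<le> real (card (G i)) * x"
      using Suc by (intro mult_right_mono) (simp_all add: assms(3))
    also have "\<dots> \<le> (\<Sum>B\<in>G i. real (card {p \<in> A - B. P (insert p B)}))"
      using extend Suc.prems by (intro sum_bounded_below) (auto simp: G_def)
    also have "\<dots> \<le> real (card (G (Suc i)) * Suc i)"
      unfolding G_def of_nat_sum[symmetric] of_nat_le_iff by (rule card_extensions_double_count[OF assms(1)])
    finally have "x ^ Suc i / fact i \<le> real (card (G (Suc i))) * real (Suc i)"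
      by (simp add: algebra_simps)
    then have "x ^ Suc i / fact i / real (Suc i) \<le> real (card (G (Suc i)))"
      by (subst pos_divide_le_eq) simp_all
    then show ?case by (simp add: divide_divide_eq_left mult.commute)
  qed
  then show ?thesis unfolding G_def by blast
qed

lemma power_two_mult_fact_le_fact_double: "2 ^ m * fact m \<le> (fact (2 * m) :: nat)"
proof (induction m)
  case (Suc m)
  have "2 ^ Suc m * fact (Suc m) = 2 * Suc m * (2 ^ m * fact m)" by (simp add: algebra_simps)
  also have "\<dots> \<le> (2 * m + 2) * (2 * m + 1) * fact (2 * m)" using Suc by (intro mult_mono) simp_all
  also have "\<dots> = fact (2 * Suc m)" by (simp add: algebra_simps)
  finally show ?case .
qed simp

lemma power_div_fact_le:
  fixes a :: real
  assumes "2 * m \<le> n" "0 \<le> a"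
  shows "a ^ m / fact n \<le> (a / 2) ^ m / fact m"
proof -
  have "2 ^ m * fact m \<le> (fact n :: nat)"
    using order_trans[OF power_two_mult_fact_le_fact_double fact_mono_nat[OF assms(1)]] .
  then have "real (2 ^ m * fact m) \<le> real (fact n)" by (rule of_nat_mono)
  then have "(2 ^ m * fact m :: real) \<le> fact n" by simp
  then have "a ^ m / fact n \<le> a ^ m / (2 ^ m * fact m)"
    using assms(2) by (intro divide_left_mono) simp_all
  then show ?thesis by (simp add: power_divide)
qed

theorem lemma24:
  fixes d :: nat and A :: "(real \<times> real) set"
  assumes "d > 1" and "finite A" and "regular d A"
  shows "real (card (Nfam3 d A {} UNIV))
           \<ge> 1 / fact (2 ^ (d + 3)) * real (card A) ^ (((d + 2) choose 2) - 3)"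
proof -
  define m where "m = ((d + 2) choose 2) - 3"
  define G where "G = {B. B \<subseteq> A \<and> card B = m \<and> in_general_position d B}"
  have "(2::nat) ^ (d + 3) = 2 * 2 ^ (d + 2)" by (simp add: power_add)
  then have "2 * m \<le> 2 ^ (d + 3)"
    using binomial_le_pow2[of "d + 2" 2] unfolding m_def by linarith
  then have "1 / fact (2 ^ (d + 3)) * real (card A) ^ m \<le> (real (card A) / 2) ^ m / fact m"
    using power_div_fact_le by simp
  also have "\<dots> \<le> real (card G)"
    unfolding G_def using assms card_general_position_extensions_ge
    by (intro card_greedy_lower_bound) (auto simp: m_def)
  also have "\<dots> \<le> real (card (Nfam3 d A {} UNIV))"
  proof -
    have "G \<subseteq> Nfam3 d A {} UNIV"
      using in_general_position_Nfam[OF _ assms(2)] assms(1) by (auto simp: G_def m_def Nfam3_def)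
    moreover have "finite (Nfam3 d A {} UNIV)"
      by (rule finite_subset[of _ "Pow A"]) (use assms(2) in \<open>auto simp: Nfam3_def Nfam_def\<close>)
    ultimately show ?thesis by (simp add: card_mono)
  qed
  finally show ?thesis unfolding m_def .
qed

end
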